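(* Let $\Sigma\subset\mathbb{R}^3$ be a pure $3$-dimensional, hereditary, complete fan with uniform smoothness $r\ge0$ on all $2$-dimensional faces, and $S=\mathbb{R}[x,y,z]$. In the free module $\bigoplus_{\tau\in\Sigma_2}S(-r-1)e_\tau$ let $V^r=\{\sum_{\tau\in\Sigma_2}a_\tau e_\tau:\sum_\tau a_\tau l_\tau^{r+1}=0\}$, and for each ray $v\in\Sigma_1$ let $K^r_v=\{\sum_{\tau\ni v}a_\tau e_\tau:\sum_{\tau\ni v}a_\tau l_\tau^{r+1}=0\}$, and $K^r=\sum_{v\in\Sigma_1}K^r_v$. Then $K^r\subseteq V^r$ and $H_1(\mathcal{J}[\Sigma])\cong V^r/K^r$ as $S$-modules.
   Context: A cone is the positive hull of finitely many vectors in $\mathbb{R}^3$; a fan is a finite set of cones closed under faces, any two meeting in a common face; $\Sigma_i$ = $i$-dim cones; complete: the union of the cones is $\mathbb{R}^3$; hereditary: for each face $\psi$ the graph on facets containing $\psi$ (edges for pairs sharing a $2$-face) is connected. $l_\tau$ generates the ideal of the linear span of $\tau\in\Sigma_2$. $J(\tau)=\langle l_\tau^{r+1}\rangle$, $J(\gamma)=\sum_{\tau\in\Sigma_2,\gamma\subseteq\tau}J(\tau)$ for non-facets $\gamma$ (including the origin), $J(\sigma)=0$ for facets. With $u_\rho$ unit ray generators and $P(\gamma)=\mathrm{conv}(\{0\}\cup\{u_\rho:\rho\subseteq\gamma\})$, $\mathrm{lk}(\gamma)=\mathrm{conv}\{u_\rho\}$, the complex $\mathcal{R}[\Sigma]$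 has $\mathcal{R}[\Sigma]_i=\bigoplus_{\gamma\in\Sigma_i}S$ with differential the cellular boundary of the relative cellular chain complex of $(P(\Sigma),\mathrm{lk}(\Sigma))$ with $S$ coefficients, and $\mathcal{J}[\Sigma]$ is its subcomplex with $\mathcal{J}[\Sigma]_i=\bigoplus_{\gamma\in\Sigma_i}J(\gamma)$. *)

theory Defs
  imports "HOL-Analysis.Analysis" "HOL-Library.Poly_Mapping"
begin

text \<open>Ambient space R^3, cones as subsets of it, and the polynomial ring
  S = R[x,y,z] represented as finitely supported maps from monomials
  (exponent vectors indexed by the 3-element type) to real coefficients.\<close>

type_synonym vec3 = "real^3"
type_synonym poly3 = "(3 \<Rightarrow>\<^sub>0 nat) \<Rightarrow>\<^sub>0 real"

definition lin_form :: "vec3 \<Rightarrow> poly3" where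
  "lin_form n = (\<Sum>i\<in>UNIV. Poly_Mapping.single (Poly_Mapping.single i 1) (n $ i))"

definition pos_hull :: "vec3 set \<Rightarrow> vec3 set" where
  "pos_hull V = {x. \<exists>c. (\<forall>v\<in>V. 0 \<le> c v) \<and> x = (\<Sum>v\<in>V. c v *\<^sub>R v)}"

definition is_cone :: "vec3 set \<Rightarrow> bool" where
  "is_cone C \<longleftrightarrow> (\<exists>V. finite V \<and> C = pos_hull V)"

text \<open>Pointedness ({0} is a face of every cone, i.e. the
  origin is a cone of the fan) is the standing convention implicit in the paper.\<close>
definition is_fan :: "vec3 set set \<Rightarrow> bool" where
  "is_fan F \<longleftrightarrow> finite F \<and> (\<forall>C\<in>F. is_cone C \<and> {0} face_of C) \<and>
     (\<forall>C\<in>F. \<forall>T. T face_of C \<and> T \<noteq> {} \<longrightarrow> T \<in> F) \<and>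
     (\<forall>C\<in>F. \<forall>D\<in>F. (C \<inter> D) face_of C \<and> (C \<inter> D) face_of D)"

definition cones_dim :: "vec3 set set \<Rightarrow> nat \<Rightarrow> vec3 set set" where
  "cones_dim F i = {C\<in>F. aff_dim C = int i}"

definition complete_fan :: "vec3 set set \<Rightarrow> bool" where
  "complete_fan F \<longleftrightarrow> \<Union>F = UNIV"

definition pure3 :: "vec3 set set \<Rightarrow> bool" where
  "pure3 F \<longleftrightarrow> (\<forall>C\<in>F. \<exists>\<sigma>\<in>cones_dim F 3. C \<subseteq> \<sigma>)"

definition hereditary :: "vec3 set set \<Rightarrow> bool" where
  "hereditary F \<longleftrightarrow> (\<forall>\<psi>\<in>F.
     (let Fs = {\<sigma>\<in>cones_dim F 3. \<psi> \<subseteq> \<sigma>};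
          E = {(a, b). a \<in> Fs \<and> b \<in> Fs \<and> (\<exists>\<tau>\<in>cones_dim F 2. \<tau> \<subseteq> a \<and> \<tau> \<subseteq> b)}
      in \<forall>\<sigma>\<in>Fs. \<forall>\<sigma>'\<in>Fs. (\<sigma>, \<sigma>') \<in> E\<^sup>*))"

definition ray_gen :: "vec3 set \<Rightarrow> vec3" where
  "ray_gen \<rho> = (SOME u. norm u = 1 \<and> \<rho> = pos_hull {u})"

definition normal2 :: "vec3 set \<Rightarrow> vec3" where
  "normal2 \<tau> = (SOME n. n \<noteq> 0 \<and> (\<forall>x\<in>\<tau>. n \<bullet> x = 0))"

text \<open>l_tau: generator of the ideal of the linear span of tau (defined up to a scalar).\<close>
definition l_form :: "vec3 set \<Rightarrow> poly3" where
  "l_form \<tau> = lin_form (normal2 \<tau>)"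

definition det3 :: "vec3 \<Rightarrow> vec3 \<Rightarrow> vec3 \<Rightarrow> real" where
  "det3 a b c = det (vector [a, b, c] :: real^3^3)"

text \<open>Incidence numbers [gamma : gamma'] of the relative cellular chain complex of
  (P(Sigma), lk(Sigma)): the cell P(gamma) is oriented by the standard orientation
  (dim 3), by the normal vector normal2 (dim 2), by the ray generator (dim 1), and
  positively (the origin).  The boundary orientation uses the outward vector first.\<close>
definition neg_sign :: "real \<Rightarrow> int" where
  "neg_sign d = (if d > 0 then -1 else if d < 0 then 1 else 0)"

definition incid :: "vec3 set \<Rightarrow> vec3 set \<Rightarrow> int" where
  "incid \<gamma> \<gamma>' =
    (if aff_dim \<gamma> = 1 \<and> aff_dim \<gamma>' = 0 then -1
     else if aff_dim \<gamma> = 2 \<and> aff_dim \<gamma>' = 1 then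
       neg_sign (det3 (normal2 \<gamma>) (SOME q. q \<in> \<gamma> \<and> q \<notin> span \<gamma>') (ray_gen \<gamma>'))
     else if aff_dim \<gamma> = 3 \<and> aff_dim \<gamma>' = 2 then
       neg_sign (normal2 \<gamma>' \<bullet> (SOME p. p \<in> \<gamma> \<and> p \<notin> span \<gamma>'))
     else 0)"

text \<open>i-chains of R[Sigma]: elements of the direct sum over Sigma_i of copies of S,
  represented as functions on cones supported on Sigma_i.\<close>
definition chains :: "vec3 set set \<Rightarrow> nat \<Rightarrow> (vec3 set \<Rightarrow> poly3) set" where
  "chains F i = {a. \<forall>\<gamma>. \<gamma> \<notin> cones_dim F i \<longrightarrow> a \<gamma> = 0}"

definition bdry :: "vec3 set set \<Rightarrow> (vec3 set \<Rightarrow> poly3) \<Rightarrow> (vec3 set \<Rightarrow> poly3)" where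
  "bdry F a = (\<lambda>\<gamma>'. if \<gamma>' \<in> F then
      (\<Sum>\<gamma>\<in>{\<gamma>\<in>F. \<gamma>' face_of \<gamma> \<and> aff_dim \<gamma> = aff_dim \<gamma>' + 1}. of_int (incid \<gamma> \<gamma>') * a \<gamma>)
      else 0)"

definition Jid :: "vec3 set set \<Rightarrow> nat \<Rightarrow> vec3 set \<Rightarrow> poly3 set" where
  "Jid F r \<gamma> = (if aff_dim \<gamma> = 3 then {0}
     else {(\<Sum>\<tau>\<in>{\<tau>\<in>cones_dim F 2. \<gamma> \<subseteq> \<tau>}. f \<tau> * l_form \<tau> ^ (r + 1)) | f. True})"

definition Jchains :: "vec3 set set \<Rightarrow> nat \<Rightarrow> nat \<Rightarrow> (vec3 set \<Rightarrow> poly3) set" where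
  "Jchains F r i = {a \<in> chains F i. \<forall>\<gamma>. a \<gamma> \<in> Jid F r \<gamma>}"

text \<open>1-cycles and 1-boundaries of J[Sigma]; H_1(J[Sigma]) = J_cycles1 / J_boundaries1.\<close>
definition J_cycles1 :: "vec3 set set \<Rightarrow> nat \<Rightarrow> (vec3 set \<Rightarrow> poly3) set" where
  "J_cycles1 F r = {a \<in> Jchains F r 1. bdry F a = (\<lambda>_. 0)}"

definition J_boundaries1 :: "vec3 set set \<Rightarrow> nat \<Rightarrow> (vec3 set \<Rightarrow> poly3) set" where
  "J_boundaries1 F r = bdry F ` Jchains F r 2"

definition Vr :: "vec3 set set \<Rightarrow> nat \<Rightarrow> (vec3 set \<Rightarrow> poly3) set" where
  "Vr F r = {a \<in> chains F 2. (\<Sum>\<tau>\<in>cones_dim F 2. a \<tau> * l_form \<tau> ^ (r + 1)) = 0}"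

definition Kv :: "vec3 set set \<Rightarrow> nat \<Rightarrow> vec3 set \<Rightarrow> (vec3 set \<Rightarrow> poly3) set" where
  "Kv F r v = {a \<in> chains F 2. (\<forall>\<tau>. \<not> v \<subseteq> \<tau> \<longrightarrow> a \<tau> = 0) \<and>
                 (\<Sum>\<tau>\<in>{\<tau>\<in>cones_dim F 2. v \<subseteq> \<tau>}. a \<tau> * l_form \<tau> ^ (r + 1)) = 0}"

definition Kr :: "vec3 set set \<Rightarrow> nat \<Rightarrow> (vec3 set \<Rightarrow> poly3) set" where
  "Kr F r = {(\<lambda>\<tau>. \<Sum>v\<in>cones_dim F 1. k v \<tau>) | k. \<forall>v\<in>cones_dim F 1. k v \<in> Kv F r v}"

text \<open>Isomorphism of quotient modules Z/B and V/K (B a submodule of Z, K a submodule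
  of V, all submodules of function modules over a commutative ring with pointwise
  operations), expressed on representatives: g induces a well-defined, injective,
  additive, S-linear and surjective map Z/B \<rightarrow> V/K.\<close>
definition quot_mod_iso ::
  "('c \<Rightarrow> 'r::comm_ring_1) set \<Rightarrow> ('c \<Rightarrow> 'r) set \<Rightarrow> ('d \<Rightarrow> 'r) set \<Rightarrow> ('d \<Rightarrow> 'r) set \<Rightarrow> bool" where
  "quot_mod_iso Z B V K \<longleftrightarrow> (\<exists>g. (\<forall>z\<in>Z. g z \<in> V) \<and>
     (\<forall>z1\<in>Z. \<forall>z2\<in>Z. (\<lambda>x. z1 x - z2 x) \<in> B \<longleftrightarrow> (\<lambda>y. g z1 y - g z2 y) \<in> K) \<and>
     (\<forall>z1\<in>Z. \<forall>z2\<in>Z. (\<lambda>y. g (\<lambda>x. z1 x + z2 x) y - (g z1 y + g z2 y)) \<in> K) \<and>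
     (\<forall>c. \<forall>z\<in>Z. (\<lambda>y. g (\<lambda>x. c * z x) y - c * g z y) \<in> K) \<and>
     (\<forall>v\<in>V. \<exists>z\<in>Z. (\<lambda>y. g z y - v y) \<in> K))"

end

theory Submission
  imports Defs
begin

text \<open>Every 2-dimensional cone \<open>\<tau>\<close> of a fan has exactly two rays, and they carry the opposite
  incidence numbers \<open>\<plusminus>1\<close>: for a ray \<open>\<rho> \<subseteq> \<tau>\<close> with generator \<open>u\<close>, the signed area \<open>n\<^sub>\<tau> \<bullet> (x \<times> u)\<close>
  has constant sign on \<open>\<tau>\<close>, since a sign change would put a point of \<open>\<rho>\<close> inside a segment of \<open>\<tau>\<close>
  not contained in \<open>\<rho>\<close>, although \<open>\<rho>\<close> is a face.

  Write a \<open>J\<close>-cycle as \<open>z\<^sub>\<rho> = \<Sum>\<^sub>\<tau>\<^sub>\<supseteq>\<^sub>\<rho> f\<^sub>\<rho>\<^sub>\<tau> l\<^sub>\<tau>\<^sup>r\<^sup>+\<^sup>1\<close>. Then \<open>\<tau> \<mapsto> \<Sum>\<^sub>\<rho>\<^sub>\<subseteq>\<^sub>\<tau> f\<^sub>\<rho>\<^sub>\<tau>\<close> lies in \<open>V\<^sup>r\<close>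
  because \<open>\<Sum>\<^sub>\<rho> z\<^sub>\<rho> = 0\<close>, and two choices of \<open>f\<close> give results differing by an element of \<open>K\<^sup>r\<close>, which
  consists exactly of these sums for the representations of the zero chain. As every \<open>\<tau>\<close> has one ray of
  each incidence, the \<open>J\<close>-boundaries are exactly the 1-chains having a representation whose sums
  vanish for every \<open>\<tau>\<close>; hence the induced map \<open>H\<^sub>1(J[\<Sigma>]) \<rightarrow> V\<^sup>r/K\<^sup>r\<close> is injective, and it is onto
  since \<open>v \<in> V\<^sup>r\<close> arises from the representation putting \<open>v\<^sub>\<tau>\<close> on one ray of each \<open>\<tau>\<close>.\<close>

unbundle cross3_syntax

section \<open>Positive hulls and the cross product\<close>

lemma zero_in_pos_hull: "0 \<in> pos_hull V"
  unfolding pos_hull_def by (auto intro: exI[of _ "\<lambda>_. 0"])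

lemma pos_hull_add:
  assumes "x \<in> pos_hull V" "y \<in> pos_hull V"
  shows "x + y \<in> pos_hull V"
proof -
  obtain c d where "\<forall>v\<in>V. 0 \<le> c v" "x = (\<Sum>v\<in>V. c v *\<^sub>R v)" "\<forall>v\<in>V. 0 \<le> d v" "y = (\<Sum>v\<in>V. d v *\<^sub>R v)"
    using assms unfolding pos_hull_def by blast
  then show ?thesis
    unfolding pos_hull_def by (auto intro!: exI[of _ "\<lambda>v. c v + d v"] simp: scaleR_add_left sum.distrib)
qed

lemma pos_hull_scaleR:
  assumes "x \<in> pos_hull V" "0 \<le> t"
  shows "t *\<^sub>R x \<in> pos_hull V"
proof -
  obtain c where "\<forall>v\<in>V. 0 \<le> c v" "x = (\<Sum>v\<in>V. c v *\<^sub>R v)"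
    using assms(1) unfolding pos_hull_def by blast
  then show ?thesis
    unfolding pos_hull_def using assms(2) by (auto intro!: exI[of _ "\<lambda>v. t * c v"] simp: scaleR_sum_right)
qed

lemma generator_in_pos_hull:
  assumes "finite V" "v \<in> V"
  shows "v \<in> pos_hull V"
proof -
  have "(\<Sum>w\<in>V. (if w = v then 1 else 0) *\<^sub>R w) = v"
    using assms by (simp add: if_distrib[of "\<lambda>c. c *\<^sub>R _"] sum.delta cong: if_cong)
  then show ?thesis
    unfolding pos_hull_def by (intro CollectI exI[of _ "\<lambda>w. if w = v then 1 else 0"]) auto
qed

lemma convex_pos_hull: "convex (pos_hull V)"
  unfolding convex_def by (auto intro!: pos_hull_add pos_hull_scaleR)

lemma pos_hull_singleton: "pos_hull {u} = {t *\<^sub>R u | t. 0 \<le> t}"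
  unfolding pos_hull_def by auto

lemma pos_hull_inner_nonneg:
  assumes "x \<in> pos_hull V" "\<And>v. v \<in> V \<Longrightarrow> 0 \<le> a \<bullet> v"
  shows "0 \<le> a \<bullet> x"
proof -
  obtain c where "\<forall>v\<in>V. 0 \<le> c v" "x = (\<Sum>v\<in>V. c v *\<^sub>R v)"
    using assms(1) unfolding pos_hull_def by blast
  then show ?thesis
    using assms(2) by (simp add: inner_sum_right sum_nonneg)
qed

lemma pos_hull_subset_span:
  assumes "V \<subseteq> span W"
  shows "pos_hull V \<subseteq> span W"
  using assms unfolding pos_hull_def by (auto intro!: span_sum span_mul)

lemma triple_identity:
  fixes n x y z :: vec3
  shows "(n \<bullet> (y \<times> z)) *\<^sub>R x + (n \<bullet> (z \<times> x)) *\<^sub>R y + (n \<bullet> (x \<times> y)) *\<^sub>R z = (x \<bullet> (y \<times> z)) *\<^sub>R n"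
  by (simp add: cross3_simps forall_3 vec_eq_iff algebra_simps)

lemma orthogonal_cross_parallel:
  fixes n x y :: vec3
  assumes "n \<noteq> 0" "n \<bullet> x = 0" "n \<bullet> y = 0"
  obtains c where "x \<times> y = c *\<^sub>R n"
proof -
  have "n \<times> (x \<times> y) = 0" using assms by (simp add: Lagrange)
  then show ?thesis using that assms(1) collinear_lemma cross_eq_0 by (metis scale_zero_left)
qed

lemma orthogonal_triple_product_0:
  fixes n x y z :: vec3
  assumes "n \<noteq> 0" "n \<bullet> x = 0" "n \<bullet> y = 0" "n \<bullet> z = 0"
  shows "x \<bullet> (y \<times> z) = 0"
  using orthogonal_cross_parallel[OF assms(1,3,4)] assms(2) by (metis inner_commute inner_scaleR_right mult_zero_right)

lemma orthogonal_area_0_parallel: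
  fixes n x y :: vec3
  assumes "n \<noteq> 0" "n \<bullet> x = 0" "n \<bullet> y = 0" "n \<bullet> (x \<times> y) = 0" "x \<noteq> 0"
  obtains c where "y = c *\<^sub>R x"
proof -
  obtain c where c: "x \<times> y = c *\<^sub>R n" using orthogonal_cross_parallel[OF assms(1-3)] .
  then have "x \<times> y = 0" using assms(1,4) by simp
  then show ?thesis using that assms(5) collinear_lemma cross_eq_0 by (metis scale_zero_left)
qed

lemma collinear_multiples: "(\<And>x. x \<in> S \<Longrightarrow> \<exists>c. x = c *\<^sub>R w) \<Longrightarrow> collinear S"
  unfolding collinear_def by (metis scaleR_diff_left)

lemma finite_transitive_has_minimal:
  assumes "finite A" "a \<in> A"
    and trans: "\<And>x y z. x \<in> A \<Longrightarrow> y \<in> A \<Longrightarrow> z \<in> A \<Longrightarrow> R x y \<Longrightarrow> R y z \<Longrightarrow> R x z"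
    and irrefl: "\<And>x. x \<in> A \<Longrightarrow> \<not> R x x"
  obtains m where "m \<in> A" "\<And>x. x \<in> A \<Longrightarrow> \<not> R x m"
proof -
  define below where "below y = {x\<in>A. R x y}" for y
  obtain m where m: "m \<in> A" "\<And>y. y \<in> A \<Longrightarrow> card (below m) \<le> card (below y)"
    using ex_has_least_nat[of "\<lambda>y. y \<in> A" a "\<lambda>y. card (below y)"] assms(2) by blast
  have "\<not> R x m" if x: "x \<in> A" for x
  proof
    assume "R x m"
    then have "below x \<subset> below m"
      unfolding below_def using trans[OF _ x m(1)] irrefl[OF x] x by blast
    then have "card (below x) < card (below m)"
      using assms(1) by (intro psubset_card_mono) (auto simp: below_def)
    then show False using m(2)[OF x] by simp
  qed
  then show ?thesis using that m(1) by blast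
qed

section \<open>The two rays of a 2-dimensional cone\<close>

definition rays_of :: "vec3 set set \<Rightarrow> vec3 set \<Rightarrow> vec3 set set" where
  "rays_of F \<tau> = {\<rho>\<in>cones_dim F 1. \<rho> \<subseteq> \<tau>}"

definition cofaces2 :: "vec3 set set \<Rightarrow> vec3 set \<Rightarrow> vec3 set set" where
  "cofaces2 F \<rho> = {\<tau>\<in>cones_dim F 2. \<rho> \<subseteq> \<tau>}"

locale fan3 =
  fixes F :: "vec3 set set"
  assumes is_fan: "is_fan F"
begin

lemma finite_cones_dim: "finite (cones_dim F i)"
  using is_fan unfolding is_fan_def cones_dim_def by simp

lemma cone_eq_pos_hull: "C \<in> F \<Longrightarrow> \<exists>V. finite V \<and> C = pos_hull V"
  using is_fan unfolding is_fan_def is_cone_def by blast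

lemma zero_face: "C \<in> F \<Longrightarrow> {0} face_of C"
  using is_fan unfolding is_fan_def by blast

lemma face_in_fan: "C \<in> F \<Longrightarrow> T face_of C \<Longrightarrow> T \<noteq> {} \<Longrightarrow> T \<in> F"
  using is_fan unfolding is_fan_def by blast

lemma subcone_face_of: "C \<in> F \<Longrightarrow> D \<in> F \<Longrightarrow> D \<subseteq> C \<Longrightarrow> D face_of C"
  using is_fan unfolding is_fan_def by (metis Int_absorb1)

lemma cone_zero: "C \<in> F \<Longrightarrow> 0 \<in> C"
  using cone_eq_pos_hull zero_in_pos_hull by blast

lemma cone_add: "C \<in> F \<Longrightarrow> x \<in> C \<Longrightarrow> y \<in> C \<Longrightarrow> x + y \<in> C"
  using cone_eq_pos_hull pos_hull_add by blast

lemma cone_scaleR: "C \<in> F \<Longrightarrow> x \<in> C \<Longrightarrow> 0 \<le> t \<Longrightarrow> t *\<^sub>R x \<in> C"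
  using cone_eq_pos_hull pos_hull_scaleR by blast

lemma convex_cone: "C \<in> F \<Longrightarrow> convex C"
  using cone_eq_pos_hull convex_pos_hull by blast

lemma cone_pointed:
  assumes "C \<in> F" "x \<in> C" "y \<in> C" "x + y = 0"
  shows "x = 0"
proof (cases "x = y")
  case True then show ?thesis using assms(4) by (simp add: scaleR_2[symmetric])
next
  case False
  have "midpoint x y = 0" using assms(4) by (simp add: midpoint_def)
  then have "0 \<in> open_segment x y" using False midpoint_in_open_segment by metis
  then show ?thesis using face_ofD[OF zero_face[OF assms(1)] _ assms(2,3)] by auto
qed

lemma cone_negative_multiple:
  assumes "C \<in> F" "x \<in> C" "c *\<^sub>R x \<in> C" "c < 0"
  shows "x = 0"
proof -
  have "(- c) *\<^sub>R x \<in> C" using cone_scaleR[OF assms(1,2), of "- c"] assms(4) by simp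
  then have "c *\<^sub>R x = 0" using cone_pointed[OF assms(1,3)] by simp
  then show ?thesis using assms(4) by simp
qed

lemma ray_eq_multiples:
  assumes "\<rho> \<in> F" "aff_dim \<rho> = 1"
  obtains w where "w \<noteq> 0" "\<rho> = {t *\<^sub>R w | t. 0 \<le> t}"
proof -
  have "\<rho> \<noteq> {0}" using assms(2) by auto
  then obtain w where w: "w \<in> \<rho>" "w \<noteq> 0" using cone_zero[OF assms(1)] by blast
  have "\<exists>t\<ge>0. x = t *\<^sub>R w" if x: "x \<in> \<rho>" for x
  proof -
    have "collinear \<rho>" using assms(2) by (simp add: collinear_aff_dim)
    then have "collinear {0, w, x}"
      using collinear_subset cone_zero[OF assms(1)] w x by (metis empty_subsetI insert_subset)
    then obtain c where c: "x = c *\<^sub>R w" using collinear_lemma w(2) by (metis scale_zero_left)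
    show ?thesis
    proof (cases "c \<ge> 0")
      case False
      then have "w = 0" using cone_negative_multiple[OF assms(1) w(1), of c] c x by simp
      then show ?thesis using w(2) by simp
    qed (use c in blast)
  qed
  then have "\<rho> = {t *\<^sub>R w | t. 0 \<le> t}" using cone_scaleR[OF assms(1) w(1)] by blast
  then show ?thesis using that w(2) by blast
qed

lemma ray_gen_nonzero_and_multiples:
  assumes "\<rho> \<in> F" "aff_dim \<rho> = 1"
  shows "ray_gen \<rho> \<noteq> 0" "\<rho> = {t *\<^sub>R ray_gen \<rho> | t. 0 \<le> t}"
proof -
  obtain w where w: "w \<noteq> 0" "\<rho> = {t *\<^sub>R w | t. 0 \<le> t}" using ray_eq_multiples[OF assms] .
  define u where "u = (1 / norm w) *\<^sub>R w"
  have "{t *\<^sub>R u | t. 0 \<le> t} = {t *\<^sub>R w | t. 0 \<le> t}"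
  proof (intro set_eqI iffI; elim CollectE exE conjE)
    fix x t assume "x = t *\<^sub>R u" "0 \<le> (t::real)"
    then show "x \<in> {t *\<^sub>R w | t. 0 \<le> t}" unfolding u_def by (intro CollectI exI[of _ "t / norm w"]) auto
  next
    fix x t assume "x = t *\<^sub>R w" "0 \<le> (t::real)"
    then show "x \<in> {t *\<^sub>R u | t. 0 \<le> t}" unfolding u_def using w(1) by (intro CollectI exI[of _ "t * norm w"]) auto
  qed
  then have "norm u = 1 \<and> \<rho> = pos_hull {u}" using w by (simp add: u_def pos_hull_singleton)
  then have "norm (ray_gen \<rho>) = 1 \<and> \<rho> = pos_hull {ray_gen \<rho>}" unfolding ray_gen_def by (rule someI)
  then show "ray_gen \<rho> \<noteq> 0" "\<rho> = {t *\<^sub>R ray_gen \<rho> | t. 0 \<le> t}" by (auto simp: pos_hull_singleton)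
qed

text \<open>\<open>normal2 \<tau> \<bullet> (x \<times> y)\<close> is the signed area spanned by \<open>x\<close> and \<open>y\<close> in the plane of \<open>\<tau>\<close>, oriented by
  the normal; the incidence numbers of the rays of \<open>\<tau>\<close> are signs of such areas.\<close>

lemma area_antisym: "n \<bullet> (y \<times> x) = - (n \<bullet> (x \<times> (y::vec3)))"
  by (simp add: cross3_simps)

context
  fixes \<tau> :: "vec3 set"
  assumes \<tau>: "\<tau> \<in> F" "aff_dim \<tau> = 2"
begin

lemma normal2_nonzero: "normal2 \<tau> \<noteq> 0"
  and normal2_orthogonal: "x \<in> \<tau> \<Longrightarrow> normal2 \<tau> \<bullet> x = 0"
proof -
  have "aff_dim \<tau> = int (dim \<tau>)" by (rule aff_dim_zero[OF hull_inc[OF cone_zero[OF \<tau>(1)]]])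
  then have "dim \<tau> < DIM(vec3)" using \<tau>(2) by simp
  then obtain a :: vec3 where "a \<noteq> 0" "span \<tau> \<subseteq> {x. a \<bullet> x = 0}"
    using lowdim_subset_hyperplane by blast
  then have "a \<noteq> 0 \<and> (\<forall>x\<in>\<tau>. a \<bullet> x = 0)" using span_base by blast
  then have "normal2 \<tau> \<noteq> 0 \<and> (\<forall>x\<in>\<tau>. normal2 \<tau> \<bullet> x = 0)"
    unfolding normal2_def by (rule someI[where P = "\<lambda>n. n \<noteq> 0 \<and> (\<forall>x\<in>\<tau>. n \<bullet> x = 0)"])
  then show "normal2 \<tau> \<noteq> 0" "x \<in> \<tau> \<Longrightarrow> normal2 \<tau> \<bullet> x = 0" by blast+
qed

lemma two_cone_not_in_line: "\<not> \<tau> \<subseteq> span {w}"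
proof
  assume "\<tau> \<subseteq> span {w}"
  then have "collinear \<tau>" by (intro collinear_multiples) (auto simp: span_singleton)
  then show False using \<tau>(2) by (simp add: collinear_aff_dim)
qed

lemma area_0_parallel:
  assumes "x \<in> \<tau>" "y \<in> \<tau>" "normal2 \<tau> \<bullet> (x \<times> y) = 0" "x \<noteq> 0"
  obtains c where "y = c *\<^sub>R x"
  using orthogonal_area_0_parallel[OF normal2_nonzero] normal2_orthogonal assms by metis

lemma area_identity:
  assumes "x \<in> \<tau>" "y \<in> \<tau>" "z \<in> \<tau>"
  shows "(normal2 \<tau> \<bullet> (y \<times> z)) *\<^sub>R x + (normal2 \<tau> \<bullet> (z \<times> x)) *\<^sub>R y + (normal2 \<tau> \<bullet> (x \<times> y)) *\<^sub>R z = 0"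
  using triple_identity[of "normal2 \<tau>" y z x] orthogonal_triple_product_0[OF normal2_nonzero]
    normal2_orthogonal assms by simp

context
  fixes \<rho> :: "vec3 set"
  assumes \<rho>: "\<rho> \<in> F" "aff_dim \<rho> = 1" "\<rho> \<subseteq> \<tau>"
begin

lemma ray_gen_in_ray: "ray_gen \<rho> \<in> \<rho>"
  using ray_gen_nonzero_and_multiples(2)[OF \<rho>(1,2)] by (metis (mono_tags, lifting) mem_Collect_eq scaleR_one zero_le_one)

lemma mem_ray_iff: "x \<in> \<rho> \<longleftrightarrow> (\<exists>t. 0 \<le> t \<and> x = t *\<^sub>R ray_gen \<rho>)"
  by (subst ray_gen_nonzero_and_multiples(2)[OF \<rho>(1,2)]) blast

lemma area_with_ray_sign_const:
  assumes x: "x \<in> \<tau>" and y: "y \<in> \<tau>"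
  shows "\<not> (normal2 \<tau> \<bullet> (x \<times> ray_gen \<rho>) > 0 \<and> normal2 \<tau> \<bullet> (y \<times> ray_gen \<rho>) < 0)"
proof
  let ?n = "normal2 \<tau>" and ?u = "ray_gen \<rho>"
  have u: "?u \<in> \<tau>" "?u \<noteq> 0" using ray_gen_in_ray \<rho>(3) ray_gen_nonzero_and_multiples(1)[OF \<rho>(1,2)] by auto
  assume h: "?n \<bullet> (x \<times> ?u) > 0 \<and> ?n \<bullet> (y \<times> ?u) < 0"
  define a b where "a = - (?n \<bullet> (y \<times> ?u))" and "b = ?n \<bullet> (x \<times> ?u)"
  have ab: "a > 0" "b > 0" using h by (auto simp: a_def b_def)
  define w where "w = a *\<^sub>R x + b *\<^sub>R y"
  have w: "w \<in> \<tau>" unfolding w_def using ab by (intro cone_add[OF \<tau>(1)] cone_scaleR[OF \<tau>(1)] x y) auto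
  \<comment> \<open>the positive combination \<open>w\<close> of \<open>x\<close> and \<open>y\<close> is chosen to lie on the line of \<open>\<rho>\<close>\<close>
  have "?n \<bullet> (w \<times> ?u) = 0"
    unfolding w_def a_def b_def by (simp add: Cross3.left_diff_distrib cross_mult_left inner_diff_right)
  then obtain t where t: "w = t *\<^sub>R ?u" using area_0_parallel[OF u(1) w] area_antisym[of ?n w ?u] u(2) by auto
  have "t \<ge> 0" using cone_negative_multiple[OF \<tau>(1) u(1), of t] t w u(2) by force
  then have "(1 / (a + b)) *\<^sub>R w \<in> \<rho>"
    unfolding mem_ray_iff t using ab by (intro exI[of _ "t / (a + b)"]) simp
  moreover have "(1 / (a + b)) *\<^sub>R w \<in> open_segment x y"
  proof -
    have "(1 / (a + b)) *\<^sub>R w = (1 - b / (a + b)) *\<^sub>R x + (b / (a + b)) *\<^sub>R y"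
      unfolding w_def using ab by (simp add: scaleR_add_right field_simps)
    moreover have "b / (a + b) > 0" "b / (a + b) < 1" "x \<noteq> y" using ab h by (auto simp: field_simps)
    ultimately show ?thesis using in_segment(2) by blast
  qed
  ultimately have "x \<in> \<rho>"
    using face_ofD[OF subcone_face_of[OF \<tau>(1) \<rho>(1,3)] _ x y] by blast
  then show False using h mem_ray_iff by (auto simp: cross_mult_left)
qed

lemma incid_2cone_ray_cases:
  "(incid \<tau> \<rho> = 1 \<and> (\<forall>x\<in>\<tau>. normal2 \<tau> \<bullet> (x \<times> ray_gen \<rho>) \<le> 0)) \<or>
   (incid \<tau> \<rho> = -1 \<and> (\<forall>x\<in>\<tau>. normal2 \<tau> \<bullet> (x \<times> ray_gen \<rho>) \<ge> 0))"
proof -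
  let ?n = "normal2 \<tau>" and ?u = "ray_gen \<rho>"
  define q where "q = (SOME q. q \<in> \<tau> \<and> q \<notin> span \<rho>)"
  have "\<exists>q. q \<in> \<tau> \<and> q \<notin> span \<rho>"
  proof (rule ccontr)
    assume "\<not> ?thesis"
    moreover have "span \<rho> \<subseteq> span {?u}"
      by (intro span_minimal subspace_span) (auto simp: mem_ray_iff span_base span_mul)
    ultimately show False using two_cone_not_in_line by blast
  qed
  then have q: "q \<in> \<tau>" "q \<notin> span \<rho>" unfolding q_def by (metis (mono_tags, lifting) someI_ex)+
  have incid: "incid \<tau> \<rho> = neg_sign (?n \<bullet> (q \<times> ?u))"
    unfolding incid_def det3_def dot_cross_det[symmetric] q_def using \<tau>(2) \<rho>(2) by simp
  have "?n \<bullet> (q \<times> ?u) \<noteq> 0"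
  proof
    assume "?n \<bullet> (q \<times> ?u) = 0"
    then obtain c where "q = c *\<^sub>R ?u"
      using area_0_parallel[of ?u q] ray_gen_in_ray \<rho>(3) q(1) area_antisym[of ?n ?u q]
        ray_gen_nonzero_and_multiples(1)[OF \<rho>(1,2)] by auto
    then show False using q(2) ray_gen_in_ray by (simp add: span_base span_mul)
  qed
  then show ?thesis
    using area_with_ray_sign_const[OF q(1)] area_with_ray_sign_const[OF _ q(1)] unfolding incid
    by (cases "?n \<bullet> (q \<times> ?u) > 0") (force simp: neg_sign_def)+
qed

end


lemma incid_2cone_distinct_rays:
  assumes \<rho>1: "\<rho>1 \<in> F" "aff_dim \<rho>1 = 1" "\<rho>1 \<subseteq> \<tau>"
    and \<rho>2: "\<rho>2 \<in> F" "aff_dim \<rho>2 = 1" "\<rho>2 \<subseteq> \<tau>"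
    and "\<rho>1 \<noteq> \<rho>2"
  shows "incid \<tau> \<rho>1 \<noteq> incid \<tau> \<rho>2"
proof
  assume eq: "incid \<tau> \<rho>1 = incid \<tau> \<rho>2"
  let ?n = "normal2 \<tau>"
  define u1 u2 where "u1 = ray_gen \<rho>1" and "u2 = ray_gen \<rho>2"
  have u1: "u1 \<noteq> 0" "u1 \<in> \<tau>" and u2: "u2 \<noteq> 0" "u2 \<in> \<tau>"
    using ray_gen_nonzero_and_multiples(1)[OF \<rho>1(1,2)] ray_gen_nonzero_and_multiples(1)[OF \<rho>2(1,2)]
      ray_gen_in_ray[OF \<rho>1] ray_gen_in_ray[OF \<rho>2] \<rho>1(3) \<rho>2(3) unfolding u1_def u2_def by auto
  have c1: "(incid \<tau> \<rho>1 = 1 \<and> (\<forall>x\<in>\<tau>. ?n \<bullet> (x \<times> u1) \<le> 0)) \<or> (incid \<tau> \<rho>1 = -1 \<and> (\<forall>x\<in>\<tau>. ?n \<bullet> (x \<times> u1) \<ge> 0))"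
    and c2: "(incid \<tau> \<rho>2 = 1 \<and> (\<forall>x\<in>\<tau>. ?n \<bullet> (x \<times> u2) \<le> 0)) \<or> (incid \<tau> \<rho>2 = -1 \<and> (\<forall>x\<in>\<tau>. ?n \<bullet> (x \<times> u2) \<ge> 0))"
    using incid_2cone_ray_cases[OF \<rho>1] incid_2cone_ray_cases[OF \<rho>2] unfolding u1_def u2_def .
  have "?n \<bullet> (u2 \<times> u1) = 0"
  proof (cases "incid \<tau> \<rho>1 = 1")
    case True
    then have "?n \<bullet> (u2 \<times> u1) \<le> 0" "?n \<bullet> (u1 \<times> u2) \<le> 0" using c1 c2 eq u1(2) u2(2) by auto
    then show ?thesis using area_antisym[of ?n u2 u1] by linarith
  next
    case False
    then have "?n \<bullet> (u2 \<times> u1) \<ge> 0" "?n \<bullet> (u1 \<times> u2) \<ge> 0" using c1 c2 eq u1(2) u2(2) by auto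
    then show ?thesis using area_antisym[of ?n u2 u1] by linarith
  qed
  then obtain c where c: "u1 = c *\<^sub>R u2" using area_0_parallel[OF u2(2) u1(2)] u2(1) by blast
  have "c \<ge> 0" using cone_negative_multiple[OF \<tau>(1) u2(2), of c] c u1 u2 by force
  then have "c > 0" using c u1(1) by (cases "c = 0") auto
  have "\<rho>1 = \<rho>2"
  proof (intro set_eqI iffI)
    fix x assume "x \<in> \<rho>1"
    then obtain t where "0 \<le> t" "x = (t * c) *\<^sub>R u2" using mem_ray_iff[OF \<rho>1] c unfolding u1_def by auto
    then show "x \<in> \<rho>2" using mem_ray_iff[OF \<rho>2] \<open>c > 0\<close> unfolding u2_def by (metis zero_le_mult_iff less_eq_real_def)
  next
    fix x assume "x \<in> \<rho>2"
    then obtain t where "0 \<le> t" "x = (t / c) *\<^sub>R u1" using mem_ray_iff[OF \<rho>2] c \<open>c > 0\<close> unfolding u2_def by auto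
    then show "x \<in> \<rho>1" using mem_ray_iff[OF \<rho>1] \<open>c > 0\<close> unfolding u1_def by (metis divide_nonneg_pos)
  qed
  then show False using assms(7) by simp
qed

lemma extremal_generators:
  obtains v1 v2 where "v1 \<in> \<tau>" "v1 \<noteq> 0" "v2 \<in> \<tau>" "v2 \<noteq> 0" "normal2 \<tau> \<bullet> (v1 \<times> v2) > 0"
    "\<And>x. x \<in> \<tau> \<Longrightarrow> normal2 \<tau> \<bullet> (v1 \<times> x) \<ge> 0" "\<And>x. x \<in> \<tau> \<Longrightarrow> normal2 \<tau> \<bullet> (x \<times> v2) \<ge> 0"
proof -
  let ?n = "normal2 \<tau>"
  obtain V where V: "finite V" "\<tau> = pos_hull V" using cone_eq_pos_hull[OF \<tau>(1)] by blast
  define A where "A = V - {0}"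
  have fin: "finite A" using V(1) unfolding A_def by simp
  have A: "v \<in> \<tau>" "v \<noteq> 0" if "v \<in> A" for v
    using that generator_in_pos_hull[OF V(1)] V(2) unfolding A_def by auto
  have span_A: "\<tau> \<subseteq> span {w}" if "A \<subseteq> span {w}" for w
  proof -
    have "V \<subseteq> span {w}" using that span_zero unfolding A_def by blast
    then show ?thesis using pos_hull_subset_span V(2) by blast
  qed
  obtain a where a: "a \<in> A" using span_A[of 0] two_cone_not_in_line by blast
  have extend: "0 \<le> p \<bullet> x" if "\<And>v. v \<in> A \<Longrightarrow> 0 \<le> p \<bullet> v" "x \<in> \<tau>" for p x
  proof -
    have "0 \<le> p \<bullet> v" if "v \<in> V" for v
      using that \<open>\<And>v. v \<in> A \<Longrightarrow> 0 \<le> p \<bullet> v\<close> unfolding A_def by (cases "v = 0") auto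
    then show ?thesis using pos_hull_inner_nonneg \<open>x \<in> \<tau>\<close> V(2) by blast
  qed
  \<comment> \<open>positive area from \<open>x\<close> to \<open>y\<close> is a strict order on the nonzero generators, since \<open>\<tau>\<close> is pointed\<close>
  have trans: "?n \<bullet> (x \<times> z) > 0"
    if xyz: "x \<in> A" "y \<in> A" "z \<in> A" and "?n \<bullet> (x \<times> y) > 0" "?n \<bullet> (y \<times> z) > 0" for x y z
  proof (rule ccontr)
    assume "\<not> ?thesis"
    then have zx: "?n \<bullet> (z \<times> x) \<ge> 0" using area_antisym[of ?n z x] by linarith
    have "(?n \<bullet> (y \<times> z)) *\<^sub>R x \<in> \<tau>" using that by (intro cone_scaleR[OF \<tau>(1)] A) auto
    moreover have "(?n \<bullet> (z \<times> x)) *\<^sub>R y + (?n \<bullet> (x \<times> y)) *\<^sub>R z \<in> \<tau>"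
      using that zx by (intro cone_add[OF \<tau>(1)] cone_scaleR[OF \<tau>(1)] A) auto
    moreover have "(?n \<bullet> (y \<times> z)) *\<^sub>R x + ((?n \<bullet> (z \<times> x)) *\<^sub>R y + (?n \<bullet> (x \<times> y)) *\<^sub>R z) = 0"
      using area_identity[OF A(1)[OF xyz(1)] A(1)[OF xyz(2)] A(1)[OF xyz(3)]] by (simp add: add.assoc)
    ultimately have "(?n \<bullet> (y \<times> z)) *\<^sub>R x = 0" by (rule cone_pointed[OF \<tau>(1)])
    then show False using that A(2)[OF xyz(1)] by simp
  qed
  have irrefl: "\<not> ?n \<bullet> (x \<times> x) > 0" for x by simp
  obtain v1 where v1: "v1 \<in> A" "\<And>x. x \<in> A \<Longrightarrow> \<not> ?n \<bullet> (x \<times> v1) > 0"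
    using finite_transitive_has_minimal[OF fin a, of "\<lambda>x y. ?n \<bullet> (x \<times> y) > 0"] trans irrefl by blast
  obtain v2 where v2: "v2 \<in> A" "\<And>x. x \<in> A \<Longrightarrow> \<not> ?n \<bullet> (v2 \<times> x) > 0"
    using finite_transitive_has_minimal[OF fin a, of "\<lambda>x y. ?n \<bullet> (y \<times> x) > 0"] trans irrefl by blast
  have g1: "?n \<bullet> (v1 \<times> x) \<ge> 0" if "x \<in> A" for x using v1(2)[OF that] area_antisym[of ?n x v1] by linarith
  have g2: "?n \<bullet> (x \<times> v2) \<ge> 0" if "x \<in> A" for x using v2(2)[OF that] area_antisym[of ?n v2 x] by linarith
  have "?n \<bullet> (v1 \<times> v2) > 0"
  proof (rule ccontr)
    assume "\<not> ?thesis"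
    then have "?n \<bullet> (v1 \<times> v2) = 0" using g1[OF v2(1)] by linarith
    then obtain c where c: "v2 = c *\<^sub>R v1"
      using area_0_parallel[OF A(1)[OF v1(1)] A(1)[OF v2(1)] _ A(2)[OF v1(1)]] by blast
    have "c \<ge> 0" using cone_negative_multiple[OF \<tau>(1) A(1)[OF v1(1)], of c] c A(1,2)[OF v1(1)] A(1)[OF v2(1)] by force
    then have "c > 0" using c A(2)[OF v2(1)] by (cases "c = 0") auto
    have "v \<in> span {v1}" if v: "v \<in> A" for v
    proof -
      have "?n \<bullet> (v \<times> v1) \<ge> 0" using g2[OF v] \<open>c > 0\<close> c by (simp add: cross_mult_right zero_le_mult_iff)
      then have "?n \<bullet> (v1 \<times> v) = 0" using g1[OF v] area_antisym[of ?n v1 v] by linarith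
      then obtain k where "v = k *\<^sub>R v1"
        using area_0_parallel[OF A(1)[OF v1(1)] A(1)[OF v] _ A(2)[OF v1(1)]] by blast
      then show ?thesis by (simp add: span_base span_mul)
    qed
    then show False using span_A two_cone_not_in_line by blast
  qed
  moreover have "?n \<bullet> (v1 \<times> x) \<ge> 0" if "x \<in> \<tau>" for x
    using extend[of "?n \<times> v1" x] g1 that by (simp add: cross3_simps)
  moreover have "?n \<bullet> (x \<times> v2) \<ge> 0" if "x \<in> \<tau>" for x
    using extend[of "v2 \<times> ?n" x] g2 that by (simp add: cross3_simps)
  ultimately show ?thesis using that A v1(1) v2(1) by blast
qed

lemma supporting_line_is_ray:
  assumes v: "v \<in> \<tau>" "v \<noteq> 0"
    and supp: "\<And>x. x \<in> \<tau> \<Longrightarrow> a \<bullet> x \<ge> 0" "a \<bullet> v = 0"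
    and line: "\<And>x. x \<in> \<tau> \<Longrightarrow> a \<bullet> x = 0 \<Longrightarrow> \<exists>k. x = k *\<^sub>R v"
  shows "\<tau> \<inter> {x. a \<bullet> x = 0} \<in> rays_of F \<tau>"
proof -
  let ?H = "\<tau> \<inter> {x. a \<bullet> x = 0}"
  have "?H face_of \<tau>"
    using face_of_Int_supporting_hyperplane_ge[OF convex_cone[OF \<tau>(1)], where a=a and b=0] supp(1) by simp
  then have "?H \<in> F" using face_in_fan[OF \<tau>(1)] v supp(2) by blast
  have "collinear ?H" using line by (intro collinear_multiples) blast
  then have "aff_dim ?H \<le> 1" by (simp add: collinear_aff_dim)
  moreover have "aff_dim {0, v} \<le> aff_dim ?H"
    using cone_zero[OF \<tau>(1)] v supp(2) by (intro aff_dim_subset) auto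
  ultimately show ?thesis using \<open>?H \<in> F\<close> v(2) by (simp add: rays_of_def cones_dim_def)
qed

lemma rays_of_2cone:
  obtains \<rho>1 \<rho>2 where "rays_of F \<tau> = {\<rho>1, \<rho>2}" "\<rho>1 \<noteq> \<rho>2" "incid \<tau> \<rho>1 = 1" "incid \<tau> \<rho>2 = -1"
proof -
  let ?n = "normal2 \<tau>"
  obtain v1 v2 where v: "v1 \<in> \<tau>" "v1 \<noteq> 0" "v2 \<in> \<tau>" "v2 \<noteq> 0" "?n \<bullet> (v1 \<times> v2) > 0"
    and v1: "\<And>x. x \<in> \<tau> \<Longrightarrow> ?n \<bullet> (v1 \<times> x) \<ge> 0" and v2: "\<And>x. x \<in> \<tau> \<Longrightarrow> ?n \<bullet> (x \<times> v2) \<ge> 0"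
    using extremal_generators by blast
  have triple: "(?n \<times> v1) \<bullet> x = ?n \<bullet> (v1 \<times> x)" "(v2 \<times> ?n) \<bullet> x = ?n \<bullet> (x \<times> v2)" for x
    by (simp_all add: cross3_simps)
  define a b where "a = \<tau> \<inter> {x. (?n \<times> v1) \<bullet> x = 0}" and "b = \<tau> \<inter> {x. (v2 \<times> ?n) \<bullet> x = 0}"
  have a: "a \<in> rays_of F \<tau>" unfolding a_def
    by (rule supporting_line_is_ray[OF v(1,2)])
      (auto simp: triple v1 elim: area_0_parallel[OF v(1) _ _ v(2)])
  have b: "b \<in> rays_of F \<tau>" unfolding b_def
    by (rule supporting_line_is_ray[OF v(3,4)])
      (auto simp: triple v2 area_antisym[of ?n v2] elim: area_0_parallel[OF v(3) _ _ v(4)])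
  have "v1 \<in> a - b" using v unfolding a_def b_def triple by auto
  then have ab: "a \<noteq> b" by blast
  have incid_pm: "incid \<tau> \<rho> = 1 \<or> incid \<tau> \<rho> = -1" if "\<rho> \<in> rays_of F \<tau>" for \<rho>
    using incid_2cone_ray_cases that unfolding rays_of_def cones_dim_def by fastforce
  have ne: "incid \<tau> \<rho> \<noteq> incid \<tau> \<rho>'" if "\<rho> \<in> rays_of F \<tau>" "\<rho>' \<in> rays_of F \<tau>" "\<rho> \<noteq> \<rho>'" for \<rho> \<rho>'
    using incid_2cone_distinct_rays that unfolding rays_of_def cones_dim_def by auto
  have rays: "rays_of F \<tau> = {a, b}"
  proof (intro subset_antisym subsetI)
    fix \<rho> assume \<rho>: "\<rho> \<in> rays_of F \<tau>"
    show "\<rho> \<in> {a, b}"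
    proof (rule ccontr)
      assume "\<rho> \<notin> {a, b}"
      then show False
        using ne[OF \<rho> a] ne[OF \<rho> b] ne[OF a b ab]
          incid_pm[OF \<rho>] incid_pm[OF a] incid_pm[OF b] by auto
    qed
  qed (use a b in auto)
  show ?thesis
  proof (cases "incid \<tau> a = 1")
    case True
    then show ?thesis
      using that[of a b] rays ab incid_pm[OF b] ne[OF a b ab] by auto
  next
    case False
    then show ?thesis
      using that[of b a] rays ab incid_pm[OF a] incid_pm[OF b] ne[OF a b ab]
      by (auto simp: insert_commute)
  qed
qed

end

end


section \<open>Representing 1-cycles by coefficients on 2-cones\<close>

definition represents :: "vec3 set set \<Rightarrow> nat \<Rightarrow> (vec3 set \<Rightarrow> vec3 set \<Rightarrow> poly3) \<Rightarrow> (vec3 set \<Rightarrow> poly3) \<Rightarrow> bool" where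
  "represents F r f z \<longleftrightarrow> (\<forall>\<rho>\<in>cones_dim F 1. z \<rho> = (\<Sum>\<tau>\<in>cofaces2 F \<rho>. f \<rho> \<tau> * l_form \<tau> ^ (r + 1)))"

definition gather :: "vec3 set set \<Rightarrow> (vec3 set \<Rightarrow> vec3 set \<Rightarrow> poly3) \<Rightarrow> vec3 set \<Rightarrow> poly3" where
  "gather F f \<tau> = (if \<tau> \<in> cones_dim F 2 then \<Sum>\<rho>\<in>rays_of F \<tau>. f \<rho> \<tau> else 0)"

definition syzygy_of :: "vec3 set set \<Rightarrow> nat \<Rightarrow> (vec3 set \<Rightarrow> poly3) \<Rightarrow> vec3 set \<Rightarrow> poly3" where
  "syzygy_of F r z = gather F (SOME f. represents F r f z)"

definition pos_ray :: "vec3 set set \<Rightarrow> vec3 set \<Rightarrow> vec3 set" where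
  "pos_ray F \<tau> = (SOME \<rho>. \<rho> \<in> rays_of F \<tau> \<and> incid \<tau> \<rho> = 1)"

lemma represents_add:
  "represents F r f z \<Longrightarrow> represents F r g w \<Longrightarrow>
    represents F r (\<lambda>\<rho> \<tau>. f \<rho> \<tau> + g \<rho> \<tau>) (\<lambda>\<rho>. z \<rho> + w \<rho>)"
  by (simp add: represents_def distrib_right sum.distrib)

lemma represents_diff:
  "represents F r f z \<Longrightarrow> represents F r g w \<Longrightarrow>
    represents F r (\<lambda>\<rho> \<tau>. f \<rho> \<tau> - g \<rho> \<tau>) (\<lambda>\<rho>. z \<rho> - w \<rho>)"
  by (simp add: represents_def left_diff_distrib sum_subtractf)

lemma represents_scale:
  "represents F r f z \<Longrightarrow> represents F r (\<lambda>\<rho> \<tau>. c * f \<rho> \<tau>) (\<lambda>\<rho>. c * z \<rho>)"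
  by (simp add: represents_def sum_distrib_left mult.assoc)

lemma represents_some: "represents F r f z \<Longrightarrow> represents F r (SOME f. represents F r f z) z"
  by (rule someI[of "\<lambda>f. represents F r f z"])

lemma gather_add: "gather F (\<lambda>\<rho> \<tau>. f \<rho> \<tau> + g \<rho> \<tau>) \<tau> = gather F f \<tau> + gather F g \<tau>"
  by (simp add: gather_def sum.distrib)

lemma gather_diff: "gather F (\<lambda>\<rho> \<tau>. f \<rho> \<tau> - g \<rho> \<tau>) \<tau> = gather F f \<tau> - gather F g \<tau>"
  by (simp add: gather_def sum_subtractf)

lemma gather_scale: "gather F (\<lambda>\<rho> \<tau>. c * f \<rho> \<tau>) \<tau> = c * gather F f \<tau>"
  by (simp add: gather_def sum_distrib_left)

lemma gather_in_chains: "gather F f \<in> chains F 2"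
  by (simp add: gather_def chains_def)

lemma zero_in_Jid: "0 \<in> Jid F r \<gamma>"
  unfolding Jid_def by (auto intro!: exI[of _ "\<lambda>_. 0"])

context fan3
begin

lemma Jid_ray:
  "\<rho> \<in> cones_dim F 1 \<Longrightarrow> Jid F r \<rho> = {\<Sum>\<tau>\<in>cofaces2 F \<rho>. g \<tau> * l_form \<tau> ^ (r + 1) | g. True}"
  by (simp add: Jid_def cofaces2_def cones_dim_def)

lemma Jid_2cone:
  assumes "\<tau> \<in> cones_dim F 2"
  shows "Jid F r \<tau> = {c * l_form \<tau> ^ (r + 1) | c. True}"
proof -
  have "{\<tau>'\<in>cones_dim F 2. \<tau> \<subseteq> \<tau>'} = {\<tau>}"
  proof (intro set_eqI iffI)
    fix \<tau>' assume \<tau>': "\<tau>' \<in> {\<tau>'\<in>cones_dim F 2. \<tau> \<subseteq> \<tau>'}"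
    then have "\<tau> face_of \<tau>'" using assms subcone_face_of by (auto simp: cones_dim_def)
    then show "\<tau>' \<in> {\<tau>}"
      using face_of_aff_dim_lt[OF convex_cone] \<tau>' assms by (fastforce simp: cones_dim_def)
  qed (use assms in auto)
  then show ?thesis using assms by (auto simp: Jid_def cones_dim_def)
qed

lemma represents_iff_Jid: "(\<exists>f. represents F r f z) \<longleftrightarrow> (\<forall>\<rho>\<in>cones_dim F 1. z \<rho> \<in> Jid F r \<rho>)"
proof
  assume "\<forall>\<rho>\<in>cones_dim F 1. z \<rho> \<in> Jid F r \<rho>"
  then have "\<forall>\<rho>\<in>cones_dim F 1. \<exists>g. z \<rho> = (\<Sum>\<tau>\<in>cofaces2 F \<rho>. g \<tau> * l_form \<tau> ^ (r + 1))"
    by (simp add: Jid_ray)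
  then show "\<exists>f. represents F r f z" unfolding represents_def by (rule bchoice)
qed (auto simp: represents_def Jid_ray)

lemma sum_rays_represented:
  assumes "represents F r f z"
  shows "(\<Sum>\<rho>\<in>cones_dim F 1. z \<rho>) = (\<Sum>\<tau>\<in>cones_dim F 2. gather F f \<tau> * l_form \<tau> ^ (r + 1))"
proof -
  have "(\<Sum>\<rho>\<in>cones_dim F 1. z \<rho>) = (\<Sum>\<rho>\<in>cones_dim F 1. \<Sum>\<tau>\<in>cofaces2 F \<rho>. f \<rho> \<tau> * l_form \<tau> ^ (r + 1))"
    using assms by (simp add: represents_def)
  also have "\<dots> = (\<Sum>\<tau>\<in>cones_dim F 2. \<Sum>\<rho>\<in>rays_of F \<tau>. f \<rho> \<tau> * l_form \<tau> ^ (r + 1))"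
    unfolding cofaces2_def rays_of_def by (rule sum.swap_restrict[OF finite_cones_dim finite_cones_dim])
  also have "\<dots> = (\<Sum>\<tau>\<in>cones_dim F 2. gather F f \<tau> * l_form \<tau> ^ (r + 1))"
    by (simp add: gather_def sum_distrib_right)
  finally show ?thesis .
qed

lemma Kr_eq_gather: "Kr F r = {gather F h | h. represents F r h (\<lambda>_. 0)}"
proof (intro set_eqI iffI)
  fix x assume "x \<in> Kr F r"
  then obtain k where k: "\<forall>v\<in>cones_dim F 1. k v \<in> Kv F r v" and x: "x = (\<lambda>\<tau>. \<Sum>v\<in>cones_dim F 1. k v \<tau>)"
    unfolding Kr_def by blast
  have "represents F r k (\<lambda>_. 0)"
    using k by (simp add: represents_def Kv_def cofaces2_def)
  moreover have "x = gather F k"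
  proof
    fix \<tau>
    have "k v \<tau> = 0" if "v \<in> cones_dim F 1" "\<tau> \<notin> cones_dim F 2 \<or> \<not> v \<subseteq> \<tau>" for v
      using k that by (auto simp: Kv_def chains_def)
    then show "x \<tau> = gather F k \<tau>"
      unfolding x gather_def rays_of_def
      by (auto simp: sum.inter_filter[OF finite_cones_dim] intro: sum.neutral sum.cong)
  qed
  ultimately show "x \<in> {gather F h | h. represents F r h (\<lambda>_. 0)}" by blast
next
  fix x assume "x \<in> {gather F h | h. represents F r h (\<lambda>_. 0)}"
  then obtain h where h: "represents F r h (\<lambda>_. 0)" and x: "x = gather F h" by blast
  define k where "k v \<tau> = (if \<tau> \<in> cofaces2 F v then h v \<tau> else 0)" for v \<tau>
  have "k v \<in> Kv F r v" if v: "v \<in> cones_dim F 1" for v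
  proof -
    have "(\<Sum>\<tau>\<in>cofaces2 F v. k v \<tau> * l_form \<tau> ^ (r + 1)) = (\<Sum>\<tau>\<in>cofaces2 F v. h v \<tau> * l_form \<tau> ^ (r + 1))"
      by (rule sum.cong) (simp_all add: k_def)
    also have "\<dots> = 0" using h v by (simp add: represents_def)
    finally show ?thesis by (auto simp: Kv_def chains_def k_def cofaces2_def)
  qed
  moreover have "x = (\<lambda>\<tau>. \<Sum>v\<in>cones_dim F 1. k v \<tau>)"
    unfolding x gather_def k_def rays_of_def cofaces2_def
    by (auto simp: sum.inter_filter[OF finite_cones_dim] intro!: sum.neutral)
  ultimately show "x \<in> Kr F r" unfolding Kr_def by blast
qed

lemma Kr_subset_Vr: "Kr F r \<subseteq> Vr F r"
proof
  fix x assume "x \<in> Kr F r"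
  then obtain h where h: "represents F r h (\<lambda>_. 0)" and x: "x = gather F h" by (auto simp: Kr_eq_gather)
  show "x \<in> Vr F r" using sum_rays_represented[OF h] by (simp add: x Vr_def gather_in_chains)
qed

lemma sum_incid_rays_of:
  assumes "\<tau> \<in> cones_dim F 2"
  shows "(\<Sum>\<rho>\<in>rays_of F \<tau>. of_int (incid \<tau> \<rho>) * c) = (0::poly3)"
proof -
  have "\<tau> \<in> F" "aff_dim \<tau> = 2" using assms by (auto simp: cones_dim_def)
  then obtain \<rho>1 \<rho>2 where "rays_of F \<tau> = {\<rho>1, \<rho>2}" "\<rho>1 \<noteq> \<rho>2" "incid \<tau> \<rho>1 = 1" "incid \<tau> \<rho>2 = -1"
    by (rule rays_of_2cone)
  then show ?thesis by simp
qed

lemma pos_ray: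
  assumes "\<tau> \<in> cones_dim F 2"
  shows "pos_ray F \<tau> \<in> rays_of F \<tau>" "incid \<tau> (pos_ray F \<tau>) = 1"
proof -
  have "\<tau> \<in> F" "aff_dim \<tau> = 2" using assms by (auto simp: cones_dim_def)
  then obtain \<rho>1 \<rho>2 where "rays_of F \<tau> = {\<rho>1, \<rho>2}" "incid \<tau> \<rho>1 = 1"
    by (rule rays_of_2cone)
  then have "\<exists>\<rho>. \<rho> \<in> rays_of F \<tau> \<and> incid \<tau> \<rho> = 1" by blast
  then have "pos_ray F \<tau> \<in> rays_of F \<tau> \<and> incid \<tau> (pos_ray F \<tau>) = 1"
    unfolding pos_ray_def by (rule someI_ex)
  then show "pos_ray F \<tau> \<in> rays_of F \<tau>" "incid \<tau> (pos_ray F \<tau>) = 1" by blast+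
qed

lemma balanced_coeff_eq:
  assumes "\<tau> \<in> cones_dim F 2" "\<rho> \<in> rays_of F \<tau>" "gather F f \<tau> = 0"
  shows "of_int (incid \<tau> \<rho>) * f (pos_ray F \<tau>) \<tau> = f \<rho> \<tau>"
proof -
  have "\<tau> \<in> F" "aff_dim \<tau> = 2" using assms(1) by (auto simp: cones_dim_def)
  then obtain \<rho>1 \<rho>2 where \<rho>: "rays_of F \<tau> = {\<rho>1, \<rho>2}" "\<rho>1 \<noteq> \<rho>2" "incid \<tau> \<rho>1 = 1" "incid \<tau> \<rho>2 = -1"
    by (rule rays_of_2cone)
  have pos: "pos_ray F \<tau> = \<rho>1" using pos_ray[OF assms(1)] \<rho>(1,4) by auto
  have "f \<rho>1 \<tau> + f \<rho>2 \<tau> = 0" using assms(1,3) \<rho>(1,2) by (simp add: gather_def)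
  then have "f \<rho>2 \<tau> = - f \<rho>1 \<tau>" by (simp add: add_eq_0_iff)
  moreover have "\<rho> = \<rho>1 \<or> \<rho> = \<rho>2" using assms(2) \<rho>(1) by blast
  ultimately show ?thesis using \<rho>(3,4) pos by auto
qed

lemma zero_dim_cone:
  assumes "\<gamma> \<in> F" "aff_dim \<gamma> = 0"
  shows "\<gamma> = {0}"
proof -
  obtain p where "\<gamma> = {p}" using assms(2) aff_dim_eq_0 by blast
  then show ?thesis using cone_zero[OF assms(1)] by simp
qed

lemma bdry_1chain:
  assumes a: "a \<in> chains F 1" and \<gamma>: "\<gamma> \<in> F"
  shows "bdry F a \<gamma> = (if aff_dim \<gamma> = 0 then - (\<Sum>\<rho>\<in>cones_dim F 1. a \<rho>) else 0)"
proof (cases "aff_dim \<gamma> = 0")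
  case True
  then have "{\<gamma>'\<in>F. \<gamma> face_of \<gamma>' \<and> aff_dim \<gamma>' = aff_dim \<gamma> + 1} = cones_dim F 1"
    using zero_dim_cone[OF \<gamma>] zero_face by (auto simp: cones_dim_def)
  then show ?thesis
    using True \<gamma> by (simp add: bdry_def incid_def cones_dim_def sum_negf)
next
  case False
  have "a \<gamma>' = 0" if "aff_dim \<gamma>' = aff_dim \<gamma> + 1" for \<gamma>'
    using a that False by (auto simp: chains_def cones_dim_def)
  then show ?thesis using False by (simp add: bdry_def)
qed

lemma bdry_1chain_eq_0_iff:
  assumes z: "z \<in> chains F 1"
  shows "bdry F z = (\<lambda>_. 0) \<longleftrightarrow> (\<Sum>\<rho>\<in>cones_dim F 1. z \<rho>) = 0"
proof
  assume bdry: "bdry F z = (\<lambda>_. 0)"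
  show "(\<Sum>\<rho>\<in>cones_dim F 1. z \<rho>) = 0"
  proof (cases "cones_dim F 1 = {}")
    case False
    then obtain \<rho> where "\<rho> \<in> F" using cones_dim_def by auto
    then have "{0} \<in> F" using face_in_fan zero_face by blast
    then have "bdry F z {0} = - (\<Sum>\<rho>\<in>cones_dim F 1. z \<rho>)" using bdry_1chain[OF z] by simp
    then show ?thesis using bdry by simp
  qed simp
next
  assume "(\<Sum>\<rho>\<in>cones_dim F 1. z \<rho>) = 0"
  then have "bdry F z \<gamma> = 0" for \<gamma>
    using bdry_1chain[OF z, of \<gamma>] by (cases "\<gamma> \<in> F") (simp_all add: bdry_def)
  then show "bdry F z = (\<lambda>_. 0)" by blast
qed

lemma J_cycles1_iff:
  "z \<in> J_cycles1 F r \<longleftrightarrow>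
    z \<in> chains F 1 \<and> (\<forall>\<rho>\<in>cones_dim F 1. z \<rho> \<in> Jid F r \<rho>) \<and> (\<Sum>\<rho>\<in>cones_dim F 1. z \<rho>) = 0"
proof -
  have "(\<forall>\<gamma>. z \<gamma> \<in> Jid F r \<gamma>) \<longleftrightarrow> (\<forall>\<rho>\<in>cones_dim F 1. z \<rho> \<in> Jid F r \<rho>)" if "z \<in> chains F 1"
    using that zero_in_Jid unfolding chains_def by fastforce
  then show ?thesis unfolding J_cycles1_def Jchains_def using bdry_1chain_eq_0_iff by blast
qed

lemma bdry_ray: "\<rho> \<in> cones_dim F 1 \<Longrightarrow> bdry F b \<rho> = (\<Sum>\<tau>\<in>cofaces2 F \<rho>. of_int (incid \<tau> \<rho>) * b \<tau>)"
proof -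
  assume \<rho>: "\<rho> \<in> cones_dim F 1"
  then have "{\<gamma>\<in>F. \<rho> face_of \<gamma> \<and> aff_dim \<gamma> = aff_dim \<rho> + 1} = cofaces2 F \<rho>"
    using subcone_face_of face_of_imp_subset by (fastforce simp: cofaces2_def cones_dim_def)
  then show ?thesis using \<rho> by (simp add: bdry_def cones_dim_def)
qed

lemma bdry_2chain_off_rays:
  assumes "b \<in> chains F 2" "\<gamma> \<notin> cones_dim F 1"
  shows "bdry F b \<gamma> = 0"
  using assms by (auto simp: bdry_def chains_def cones_dim_def intro!: sum.neutral)

lemma bdry_Jchain2_represented:
  assumes "b \<in> Jchains F r 2"
  obtains f where "represents F r f (bdry F b)" "\<And>\<tau>. gather F f \<tau> = 0"
proof -
  have "\<exists>c. b \<tau> = c * l_form \<tau> ^ (r + 1)" if "\<tau> \<in> cones_dim F 2" for \<tau>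
  proof -
    have "b \<tau> \<in> Jid F r \<tau>" using assms by (simp add: Jchains_def)
    then show ?thesis unfolding Jid_2cone[OF that] by blast
  qed
  then obtain c where c: "\<And>\<tau>. \<tau> \<in> cones_dim F 2 \<Longrightarrow> b \<tau> = c \<tau> * l_form \<tau> ^ (r + 1)"
    by metis
  define f where "f \<rho> \<tau> = of_int (incid \<tau> \<rho>) * c \<tau>" for \<rho> \<tau>
  have "represents F r f (bdry F b)"
    unfolding represents_def by (auto simp: bdry_ray f_def c cofaces2_def mult.assoc intro: sum.cong)
  moreover have "gather F f \<tau> = 0" for \<tau>
    using sum_incid_rays_of by (simp add: gather_def f_def)
  ultimately show ?thesis using that by blast
qed

lemma balanced_representation_boundary:
  assumes z: "z \<in> chains F 1" and f: "represents F r f z"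
    and balanced: "\<And>\<tau>. \<tau> \<in> cones_dim F 2 \<Longrightarrow> gather F f \<tau> = 0"
  shows "z \<in> J_boundaries1 F r"
proof -
  define b where "b \<tau> = (if \<tau> \<in> cones_dim F 2 then f (pos_ray F \<tau>) \<tau> * l_form \<tau> ^ (r + 1) else 0)" for \<tau>
  have "b \<in> Jchains F r 2"
    using Jid_2cone zero_in_Jid by (auto simp: Jchains_def chains_def b_def)
  moreover have "bdry F b = z"
  proof
    fix \<gamma>
    show "bdry F b \<gamma> = z \<gamma>"
    proof (cases "\<gamma> \<in> cones_dim F 1")
      case True
      have "bdry F b \<gamma> = (\<Sum>\<tau>\<in>cofaces2 F \<gamma>. f \<gamma> \<tau> * l_form \<tau> ^ (r + 1))"
        unfolding bdry_ray[OF True]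
      proof (rule sum.cong[OF refl])
        fix \<tau> assume "\<tau> \<in> cofaces2 F \<gamma>"
        then have "\<tau> \<in> cones_dim F 2" "\<gamma> \<in> rays_of F \<tau>" using True by (auto simp: cofaces2_def rays_of_def)
        then show "of_int (incid \<tau> \<gamma>) * b \<tau> = f \<gamma> \<tau> * l_form \<tau> ^ (r + 1)"
          using balanced_coeff_eq balanced by (simp add: b_def mult.assoc[symmetric])
      qed
      then show ?thesis using f True by (simp add: represents_def)
    next
      case False
      then show ?thesis using z bdry_2chain_off_rays \<open>b \<in> Jchains F r 2\<close> by (simp add: Jchains_def chains_def)
    qed
  qed
  ultimately show ?thesis unfolding J_boundaries1_def by blast
qed

lemma J_boundaries1_iff:
  assumes "z \<in> chains F 1"
  shows "z \<in> J_boundaries1 F r \<longleftrightarrow> (\<exists>f. represents F r f z \<and> (\<forall>\<tau>. gather F f \<tau> = 0))"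
proof
  assume "z \<in> J_boundaries1 F r"
  then obtain b where "b \<in> Jchains F r 2" "z = bdry F b" unfolding J_boundaries1_def by blast
  then show "\<exists>f. represents F r f z \<and> (\<forall>\<tau>. gather F f \<tau> = 0)"
    using bdry_Jchain2_represented by metis
qed (use assms balanced_representation_boundary in blast)

lemma gather_diff_in_Kr:
  assumes "represents F r f z" "represents F r g z"
  shows "(\<lambda>\<tau>. gather F f \<tau> - gather F g \<tau>) \<in> Kr F r"
proof -
  have "represents F r (\<lambda>\<rho> \<tau>. f \<rho> \<tau> - g \<rho> \<tau>) (\<lambda>_. 0)"
    using represents_diff[OF assms] by simp
  then show ?thesis unfolding Kr_eq_gather gather_diff[symmetric] by blast
qed

lemma represents_cycle:
  "z \<in> J_cycles1 F r \<Longrightarrow> represents F r (SOME f. represents F r f z) z"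
  using represents_iff_Jid represents_some by (metis J_cycles1_iff)

lemma syzygy_of_in_Vr: "z \<in> J_cycles1 F r \<Longrightarrow> syzygy_of F r z \<in> Vr F r"
  using sum_rays_represented[OF represents_cycle] J_cycles1_iff
  by (simp add: Vr_def syzygy_of_def gather_in_chains)

lemma syzygy_of_add:
  assumes "z1 \<in> J_cycles1 F r" "z2 \<in> J_cycles1 F r"
  shows "(\<lambda>\<tau>. syzygy_of F r (\<lambda>\<rho>. z1 \<rho> + z2 \<rho>) \<tau> - (syzygy_of F r z1 \<tau> + syzygy_of F r z2 \<tau>)) \<in> Kr F r"
proof -
  have "represents F r (\<lambda>\<rho> \<tau>. (SOME f. represents F r f z1) \<rho> \<tau> + (SOME f. represents F r f z2) \<rho> \<tau>) (\<lambda>\<rho>. z1 \<rho> + z2 \<rho>)"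
    using represents_add[OF represents_cycle[OF assms(1)] represents_cycle[OF assms(2)]] .
  from gather_diff_in_Kr[OF represents_some[OF this] this] show ?thesis
    by (simp add: syzygy_of_def gather_add)
qed

lemma syzygy_of_scale:
  assumes "z \<in> J_cycles1 F r"
  shows "(\<lambda>\<tau>. syzygy_of F r (\<lambda>\<rho>. c * z \<rho>) \<tau> - c * syzygy_of F r z \<tau>) \<in> Kr F r"
proof -
  have "represents F r (\<lambda>\<rho> \<tau>. c * (SOME f. represents F r f z) \<rho> \<tau>) (\<lambda>\<rho>. c * z \<rho>)"
    using represents_scale[OF represents_cycle[OF assms]] .
  from gather_diff_in_Kr[OF represents_some[OF this] this] show ?thesis
    by (simp add: syzygy_of_def gather_scale)
qed

lemma boundary_iff_syzygy_diff_in_Kr: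
  assumes "z1 \<in> J_cycles1 F r" "z2 \<in> J_cycles1 F r"
  shows "(\<lambda>\<rho>. z1 \<rho> - z2 \<rho>) \<in> J_boundaries1 F r \<longleftrightarrow> (\<lambda>\<tau>. syzygy_of F r z1 \<tau> - syzygy_of F r z2 \<tau>) \<in> Kr F r"
proof -
  define g where "g = (\<lambda>\<rho> \<tau>. (SOME f. represents F r f z1) \<rho> \<tau> - (SOME f. represents F r f z2) \<rho> \<tau>)"
  have g: "represents F r g (\<lambda>\<rho>. z1 \<rho> - z2 \<rho>)"
    unfolding g_def by (rule represents_diff[OF represents_cycle[OF assms(1)] represents_cycle[OF assms(2)]])
  have syz: "(\<lambda>\<tau>. syzygy_of F r z1 \<tau> - syzygy_of F r z2 \<tau>) = gather F g"
    by (simp add: g_def syzygy_of_def gather_diff fun_eq_iff)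
  have chain: "(\<lambda>\<rho>. z1 \<rho> - z2 \<rho>) \<in> chains F 1" using assms by (simp add: J_cycles1_iff chains_def)
  show ?thesis
  proof
    assume "(\<lambda>\<rho>. z1 \<rho> - z2 \<rho>) \<in> J_boundaries1 F r"
    then obtain f where f: "represents F r f (\<lambda>\<rho>. z1 \<rho> - z2 \<rho>)" "\<And>\<tau>. gather F f \<tau> = 0"
      using J_boundaries1_iff[OF chain] by blast
    show "(\<lambda>\<tau>. syzygy_of F r z1 \<tau> - syzygy_of F r z2 \<tau>) \<in> Kr F r"
      using gather_diff_in_Kr[OF g f(1)] by (simp add: syz f(2))
  next
    assume "(\<lambda>\<tau>. syzygy_of F r z1 \<tau> - syzygy_of F r z2 \<tau>) \<in> Kr F r"
    then obtain h where h: "represents F r h (\<lambda>_. 0)" "gather F g = gather F h"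
      unfolding syz Kr_eq_gather by blast
    have "represents F r (\<lambda>\<rho> \<tau>. g \<rho> \<tau> - h \<rho> \<tau>) (\<lambda>\<rho>. z1 \<rho> - z2 \<rho>)"
      using represents_diff[OF g h(1)] by simp
    moreover have "gather F (\<lambda>\<rho> \<tau>. g \<rho> \<tau> - h \<rho> \<tau>) \<tau> = 0" for \<tau>
      by (simp add: gather_diff h(2))
    ultimately show "(\<lambda>\<rho>. z1 \<rho> - z2 \<rho>) \<in> J_boundaries1 F r"
      using J_boundaries1_iff[OF chain] by blast
  qed
qed

lemma syzygy_of_surj:
  assumes v: "v \<in> Vr F r"
  shows "\<exists>z\<in>J_cycles1 F r. (\<lambda>\<tau>. syzygy_of F r z \<tau> - v \<tau>) \<in> Kr F r"
proof -
  define f where "f \<rho> \<tau> = (if \<rho> = pos_ray F \<tau> then v \<tau> else 0)" for \<rho> \<tau>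
  define z where "z \<rho> = (if \<rho> \<in> cones_dim F 1 then \<Sum>\<tau>\<in>cofaces2 F \<rho>. f \<rho> \<tau> * l_form \<tau> ^ (r + 1) else 0)" for \<rho>
  have f: "represents F r f z" by (simp add: represents_def z_def)
  have "gather F f \<tau> = v \<tau>" for \<tau>
  proof (cases "\<tau> \<in> cones_dim F 2")
    case True
    have "finite (rays_of F \<tau>)" using finite_cones_dim by (simp add: rays_of_def)
    then show ?thesis using True pos_ray(1)[OF True] by (simp add: gather_def f_def sum.delta')
  qed (use v in \<open>simp add: gather_def Vr_def chains_def\<close>)
  then have gather_f: "gather F f = v" by blast
  have "\<forall>\<rho>\<in>cones_dim F 1. z \<rho> \<in> Jid F r \<rho>" using f represents_iff_Jid by blast
  moreover have "(\<Sum>\<rho>\<in>cones_dim F 1. z \<rho>) = 0"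
    using sum_rays_represented[OF f] v by (simp add: gather_f Vr_def)
  ultimately have "z \<in> J_cycles1 F r" by (simp add: J_cycles1_iff chains_def z_def)
  moreover have "(\<lambda>\<tau>. syzygy_of F r z \<tau> - v \<tau>) \<in> Kr F r"
    using gather_diff_in_Kr[OF represents_some[OF f] f] by (simp add: syzygy_of_def gather_f)
  ultimately show ?thesis by blast
qed

end

theorem lemma9p7:
  fixes F :: "(real^3) set set" and r :: nat
  assumes "is_fan F" and "pure3 F" and "complete_fan F" and "hereditary F"
  shows "Kr F r \<subseteq> Vr F r \<and> quot_mod_iso (J_cycles1 F r) (J_boundaries1 F r) (Vr F r) (Kr F r)"
proof -
  interpret fan3 F by (rule fan3.intro) (rule assms(1))
  have "quot_mod_iso (J_cycles1 F r) (J_boundaries1 F r) (Vr F r) (Kr F r)"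
    unfolding quot_mod_iso_def
    using syzygy_of_in_Vr boundary_iff_syzygy_diff_in_Kr syzygy_of_add syzygy_of_scale syzygy_of_surj
    by (intro exI[of _ "syzygy_of F r"]) blast
  then show ?thesis using Kr_subset_Vr by blast
qed

end
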